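(* Consider the general CA-RRM with affine indices $u_f(A)=\alpha_f+\beta_f^\top\psi(A)$, $f\in\mathcal F$, assume $P(i\mid A)\in(0,1)$ for all $i\in A$ and all menus $A$ in the support, and impose the normalization $(\alpha_{f_0},\beta_{f_0})=(0,\mathbf 0)$ for a baseline rule $f_0$. Let $d=\dim\psi$. Suppose there exist $d+1$ feature values $x^{(0)},\dots,x^{(d)}$ such that: (G1) for each $k\in\{0,\dots,d\}$, the matrix $H^{(k)}$ obtained by stacking the row vectors $h_i(A)^\top$ over all multi-sided menus $A$ with $\psi(A)=x^{(k)}$ and all non-reference alternatives $i\in A\setminus\{i_0(A)\}$ has rank $|\mathcal F|-1$; (G2) the $(d+1)\times(d+1)$ matrix $X$ with $k$-th row $(1,(x^{(k)})^\top)$ has full rank. Then the full parameter vector $\{(\alpha_f,\beta_f)\}_{f\in\mathcal F}$ is globally identified (up to the normalization) from the population objects $\{P(i\mid A),\kappa^i(A),\psi(A)\}$: any two normalized parameter vectors generating the same choice probabilities on these menus coincide.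
   Context: General setting: a finite collection $\mathcal M$ of menus, each a finite set $A$ of alternatives with $|A|\ge2$. A finite rule library $\mathcal F$; each rule $f$ has an activity set $\mathcal A_f\subseteq\mathcal M$ and a recommendation $r_f(A)\in A$ for $A\in\mathcal A_f$. The recommending set is $\mathcal I_i(A)=\{f: A\in\mathcal A_f,\ r_f(A)=i\}$, the active set is $\mathcal F_A=\bigcup_{i\in A}\mathcal I_i(A)$, and $\kappa_f^i(A)=\mathbf 1\{f\in\mathcal I_i(A)\}$. The model (softmax-gated CA-RRM) gives $$P(i\mid A;\theta)=\frac{\sum_{f\in\mathcal I_i(A)}\exp(u_f(A))}{\sum_{g\in\mathcal F_A}\exp(u_g(A))},\qquad u_f(A)=\alpha_f+\beta_f^\top\psi(A),$$ with $\psi:\mathcal M\to\mathbb R^d$. A menu is multi-sided if at least two distinct alternatives are recommended by some active rule. For each multi-sided menu fix a reference alternative $i_0(A)$ with $\mathcal I_{i_0(A)}(A)\neq\varnothing$; for $i\in A\setminus\{i_0(A)\}$ let $r_i(A)=P(i\mid A)/P(i_0(A)\mid A)$ and let $h_i(A)\in\mathbb R^{|\mathcal F|}$ have entries $h_{i,f}(A)=\kappa_f^i(A)-r_i(A)\kappa_f^{i_0(A)}(A)$. Positive weights $\omega_f(x)=\exp(\alpha_f+\beta_f^\top x)$. *)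

theory Defs
  imports "HOL-Analysis.Analysis"
begin

text \<open>Menus are finite sets of alternatives of type 'a; the rule library is the
  finite type 'f (so F = UNIV); features live in real^'d (d = CARD('d)).
  act f is the activity set of rule f, rec f A its recommendation.\<close>

definition recset :: "('f \<Rightarrow> 'a set set) \<Rightarrow> ('f \<Rightarrow> 'a set \<Rightarrow> 'a) \<Rightarrow> 'a \<Rightarrow> 'a set \<Rightarrow> 'f set" where
  "recset act rec i A = {f. A \<in> act f \<and> rec f A = i}"

definition activeset :: "('f \<Rightarrow> 'a set set) \<Rightarrow> ('f \<Rightarrow> 'a set \<Rightarrow> 'a) \<Rightarrow> 'a set \<Rightarrow> 'f set" where
  "activeset act rec A = (\<Union>i\<in>A. recset act rec i A)"

definition kappa :: "('f \<Rightarrow> 'a set set) \<Rightarrow> ('f \<Rightarrow> 'a set \<Rightarrow> 'a) \<Rightarrow> 'f \<Rightarrow> 'a \<Rightarrow> 'a set \<Rightarrow> real" where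
  "kappa act rec f i A = (if f \<in> recset act rec i A then 1 else 0)"

definition uidx :: "('f \<Rightarrow> real) \<Rightarrow> ('f \<Rightarrow> real^'d) \<Rightarrow> ('a set \<Rightarrow> real^'d) \<Rightarrow> 'f \<Rightarrow> 'a set \<Rightarrow> real" where
  "uidx \<alpha> \<beta> \<psi> f A = \<alpha> f + \<beta> f \<bullet> \<psi> A"

definition caprob :: "('f \<Rightarrow> 'a set set) \<Rightarrow> ('f \<Rightarrow> 'a set \<Rightarrow> 'a) \<Rightarrow> ('a set \<Rightarrow> real^'d)
    \<Rightarrow> ('f \<Rightarrow> real) \<Rightarrow> ('f \<Rightarrow> real^'d) \<Rightarrow> 'a \<Rightarrow> 'a set \<Rightarrow> real" where
  "caprob act rec \<psi> \<alpha> \<beta> i A =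
     (\<Sum>f\<in>recset act rec i A. exp (uidx \<alpha> \<beta> \<psi> f A)) /
     (\<Sum>g\<in>activeset act rec A. exp (uidx \<alpha> \<beta> \<psi> g A))"

definition multisided :: "('f \<Rightarrow> 'a set set) \<Rightarrow> ('f \<Rightarrow> 'a set \<Rightarrow> 'a) \<Rightarrow> 'a set \<Rightarrow> bool" where
  "multisided act rec A \<longleftrightarrow>
     (\<exists>i\<in>A. \<exists>j\<in>A. i \<noteq> j \<and> recset act rec i A \<noteq> {} \<and> recset act rec j A \<noteq> {})"

definition hvec :: "('f::finite \<Rightarrow> 'a set set) \<Rightarrow> ('f \<Rightarrow> 'a set \<Rightarrow> 'a) \<Rightarrow> ('a \<Rightarrow> 'a set \<Rightarrow> real)
    \<Rightarrow> ('a set \<Rightarrow> 'a) \<Rightarrow> 'a \<Rightarrow> 'a set \<Rightarrow> real^'f" where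
  "hvec act rec P i0 i A =
     (\<chi> f. kappa act rec f i A - (P i A / P (i0 A) A) * kappa act rec f (i0 A) A)"

text \<open>Rank of the stacked matrix H^(k): dimension of the span of its rows.\<close>
definition Hrank :: "'a set set \<Rightarrow> ('f::finite \<Rightarrow> 'a set set) \<Rightarrow> ('f \<Rightarrow> 'a set \<Rightarrow> 'a)
    \<Rightarrow> ('a set \<Rightarrow> real^'d) \<Rightarrow> ('a \<Rightarrow> 'a set \<Rightarrow> real) \<Rightarrow> ('a set \<Rightarrow> 'a) \<Rightarrow> real^'d \<Rightarrow> nat" where
  "Hrank M act rec \<psi> P i0 x =
     dim {hvec act rec P i0 i A | A i. A \<in> M \<and> multisided act rec A \<and> \<psi> A = x
                                     \<and> i \<in> A \<and> i \<noteq> i0 A}"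

text \<open>The (d+1)x(d+1) matrix X with k-th row (1, x^(k)); index None is the constant column.\<close>
definition Xmat :: "('d option \<Rightarrow> real^'d) \<Rightarrow> real^('d::finite option)^('d option)" where
  "Xmat x = (\<chi> k j. case j of None \<Rightarrow> 1 | Some l \<Rightarrow> x k $ l)"

end

theory Submission
  imports Defs
begin

(* At a feature value x, the weight vector w(x) = (exp (alpha_f + beta_f . x))_f is orthogonal
   to every row h_i(A) of H with psi(A) = x: the inner product is the numerator of P(i|A) minus
   r_i(A) times that of P(i0(A)|A). By (G1) these rows span a hyperplane, so its orthogonal
   complement is a line, and the normalisation at f0 pins w(x) down on it. Thus every affine index
   alpha_f + beta_f . x^(k) is identified, and (G2) makes (alpha_f, beta_f) unique. *)

lemma orthogonal_hyperplane_collinear: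
  fixes S :: "'a::euclidean_space set"
  assumes "dim S = DIM('a) - 1" and "v \<noteq> 0"
    and "\<And>s. s \<in> S \<Longrightarrow> s \<bullet> v = 0" and "\<And>s. s \<in> S \<Longrightarrow> s \<bullet> w = 0"
  shows "\<exists>c. w = c *\<^sub>R v"
proof -
  define C where "C = {y \<in> UNIV. \<forall>z \<in> span S. orthogonal z y}"
  have "dim C + dim (span S) = dim (UNIV :: 'a set)"
    unfolding C_def by (rule dim_subspace_orthogonal_to_vectors) auto
  then have dim_C: "dim C = 1"
    using assms(1) DIM_positive[where 'a='a] by (simp only: dim_span dim_UNIV)
  have in_C: "u \<in> C" if "\<And>s. s \<in> S \<Longrightarrow> s \<bullet> u = 0" for u
    unfolding C_def using orthogonal_to_span[of _ S u] that
    by (auto simp: orthogonal_def inner_commute)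
  show ?thesis
  proof (rule ccontr)
    assume "\<nexists>c. w = c *\<^sub>R v"
    then have "independent {w, v}" and "w \<noteq> v"
      using assms(2) by (auto simp: independent_insert span_singleton) (metis scaleR_one)
    moreover have "{w, v} \<subseteq> C" using in_C assms(3,4) by blast
    ultimately have "card {w, v} \<le> dim C" by (intro independent_card_le_dim)
    with \<open>w \<noteq> v\<close> dim_C show False by simp
  qed
qed

lemma Xmat_mult_affine:
  "Xmat x *v (\<chi> j. case j of None \<Rightarrow> a | Some l \<Rightarrow> b $ l) = (\<chi> k. a + b \<bullet> x k)"
  by (simp add: vec_eq_iff matrix_vector_mult_def Xmat_def UNIV_option_conv sum.reindex
      inner_vec_def mult.commute)

lemma affine_eq_if_Xmat_full_rank:
  assumes "rank (Xmat x) = CARD('d::finite option)"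
    and "\<And>k. a + b \<bullet> x k = a' + b' \<bullet> (x k :: real^'d)"
  shows "a = a' \<and> b = b'"
proof -
  have "inj ((*v) (Xmat x))" using assms(1) full_rank_injective by blast
  moreover have "Xmat x *v (\<chi> j. case j of None \<Rightarrow> a | Some l \<Rightarrow> b $ l)
               = Xmat x *v (\<chi> j. case j of None \<Rightarrow> a' | Some l \<Rightarrow> b' $ l)"
    using assms(2) by (simp add: Xmat_mult_affine)
  ultimately have "(\<chi> j. case j of None \<Rightarrow> a | Some l \<Rightarrow> b $ l)
                 = (\<chi> j. case j of None \<Rightarrow> a' | Some l \<Rightarrow> b' $ l)"
    by (rule injD)
  then show ?thesis
    by (metis (no_types, lifting) option.simps(4,5) vec_eq_iff vec_lambda_beta)
qed

lemma sum_kappa_mult: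
  fixes act :: "'f::finite \<Rightarrow> 'a set set"
  shows "(\<Sum>f\<in>UNIV. kappa act rec f i A * w f) = (\<Sum>f\<in>recset act rec i A. w f)"
proof -
  have "(\<Sum>f\<in>UNIV. kappa act rec f i A * w f)
      = (\<Sum>f\<in>UNIV. if f \<in> recset act rec i A then w f else 0)"
    unfolding kappa_def by (intro sum.cong) auto
  then show ?thesis by (simp add: sum.inter_restrict[symmetric])
qed

lemma caprob_ratio:
  fixes act :: "'f::finite \<Rightarrow> 'a set set"
  assumes "j \<in> A" and "recset act rec j A \<noteq> {}"
  shows "caprob act rec \<psi> \<alpha> \<beta> i A / caprob act rec \<psi> \<alpha> \<beta> j A
       = (\<Sum>f\<in>recset act rec i A. exp (uidx \<alpha> \<beta> \<psi> f A))
         / (\<Sum>f\<in>recset act rec j A. exp (uidx \<alpha> \<beta> \<psi> f A))"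
proof -
  have "recset act rec j A \<subseteq> activeset act rec A"
    using assms(1) unfolding activeset_def by auto
  then have "(\<Sum>g\<in>activeset act rec A. exp (uidx \<alpha> \<beta> \<psi> g A)) > 0"
    using assms(2) by (intro sum_pos) auto
  then show ?thesis unfolding caprob_def by simp
qed

lemma hvec_caprob_orthogonal_weights:
  fixes act :: "'f::finite \<Rightarrow> 'a set set"
  assumes "i0 A \<in> A" and "recset act rec (i0 A) A \<noteq> {}"
  shows "hvec act rec (caprob act rec \<psi> \<alpha> \<beta>) i0 i A \<bullet> (\<chi> f. exp (uidx \<alpha> \<beta> \<psi> f A)) = 0"
proof -
  define N where "N j = (\<Sum>f\<in>recset act rec j A. exp (uidx \<alpha> \<beta> \<psi> f A))" for j
  have "N (i0 A) > 0" unfolding N_def using assms(2) by (intro sum_pos) auto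
  have "hvec act rec (caprob act rec \<psi> \<alpha> \<beta>) i0 i A \<bullet> (\<chi> f. exp (uidx \<alpha> \<beta> \<psi> f A))
      = (\<Sum>f\<in>UNIV. kappa act rec f i A * exp (uidx \<alpha> \<beta> \<psi> f A))
        - N i / N (i0 A) * (\<Sum>f\<in>UNIV. kappa act rec f (i0 A) A * exp (uidx \<alpha> \<beta> \<psi> f A))"
    unfolding hvec_def inner_vec_def caprob_ratio[OF assms] N_def[symmetric]
    by (simp add: algebra_simps sum_subtractf sum_distrib_left)
  also have "\<dots> = N i - N i / N (i0 A) * N (i0 A)"
    unfolding sum_kappa_mult N_def ..
  finally show ?thesis using \<open>N (i0 A) > 0\<close> by simp
qed

definition hrows :: "'a set set \<Rightarrow> ('f::finite \<Rightarrow> 'a set set) \<Rightarrow> ('f \<Rightarrow> 'a set \<Rightarrow> 'a)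
    \<Rightarrow> ('a set \<Rightarrow> real^'d) \<Rightarrow> ('a \<Rightarrow> 'a set \<Rightarrow> real) \<Rightarrow> ('a set \<Rightarrow> 'a) \<Rightarrow> real^'d \<Rightarrow> (real^'f) set"
  where "hrows M act rec \<psi> P i0 x =
     {hvec act rec P i0 i A | A i. A \<in> M \<and> multisided act rec A \<and> \<psi> A = x \<and> i \<in> A \<and> i \<noteq> i0 A}"

lemma Hrank_eq_dim_hrows: "Hrank M act rec \<psi> P i0 x = dim (hrows M act rec \<psi> P i0 x)"
  unfolding Hrank_def hrows_def ..

lemma hrows_orthogonal_weights:
  fixes act :: "'f::finite \<Rightarrow> 'a set set"
  assumes "\<And>A. A \<in> M \<Longrightarrow> multisided act rec A \<Longrightarrow> i0 A \<in> A \<and> recset act rec (i0 A) A \<noteq> {}"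
    and "\<And>A i. A \<in> M \<Longrightarrow> i \<in> A \<Longrightarrow> caprob act rec \<psi> \<alpha> \<beta> i A = caprob act rec \<psi> \<alpha>' \<beta>' i A"
    and "h \<in> hrows M act rec \<psi> (caprob act rec \<psi> \<alpha> \<beta>) i0 x"
  shows "h \<bullet> (\<chi> f. exp (\<alpha>' f + \<beta>' f \<bullet> x)) = 0"
proof -
  obtain A i where h: "h = hvec act rec (caprob act rec \<psi> \<alpha> \<beta>) i0 i A"
    and A: "A \<in> M" "multisided act rec A" "\<psi> A = x" "i \<in> A"
    using assms(3) unfolding hrows_def by blast
  have i0: "i0 A \<in> A" "recset act rec (i0 A) A \<noteq> {}" using assms(1) A(1,2) by auto
  have "h = hvec act rec (caprob act rec \<psi> \<alpha>' \<beta>') i0 i A"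
    unfolding h hvec_def using assms(2)[OF A(1)] A(4) i0(1) by simp
  with hvec_caprob_orthogonal_weights[of i0 A act rec \<psi> \<alpha>' \<beta>' i] i0 show ?thesis
    by (simp add: uidx_def A(3))
qed

theorem theoremA1:
  fixes M :: "'a set set"
    and act :: "'f::finite \<Rightarrow> 'a set set"
    and rec :: "'f \<Rightarrow> 'a set \<Rightarrow> 'a"
    and \<psi> :: "'a set \<Rightarrow> real^'d::finite"
    and i0 :: "'a set \<Rightarrow> 'a"
    and f0 :: "'f"
    and x :: "'d option \<Rightarrow> real^'d"
    and \<alpha> \<alpha>' :: "'f \<Rightarrow> real"
    and \<beta> \<beta>' :: "'f \<Rightarrow> real^'d"
  assumes M_fin: "finite M"
    and M_menu: "\<And>A. A \<in> M \<Longrightarrow> finite A \<and> card A \<ge> 2"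
    and act_sub: "\<And>f. act f \<subseteq> M"
    and rec_in: "\<And>f A. A \<in> act f \<Longrightarrow> rec f A \<in> A"
    and i0_ref: "\<And>A. A \<in> M \<Longrightarrow> multisided act rec A \<Longrightarrow>
                   i0 A \<in> A \<and> recset act rec (i0 A) A \<noteq> {}"
    and norm: "\<alpha> f0 = 0" "\<beta> f0 = 0"
    and norm': "\<alpha>' f0 = 0" "\<beta>' f0 = 0"
    and same: "\<And>A i. A \<in> M \<Longrightarrow> i \<in> A \<Longrightarrow>
                 caprob act rec \<psi> \<alpha> \<beta> i A = caprob act rec \<psi> \<alpha>' \<beta>' i A"
    and interior: "\<And>A i. A \<in> M \<Longrightarrow> i \<in> A \<Longrightarrow>
                 0 < caprob act rec \<psi> \<alpha> \<beta> i A \<and> caprob act rec \<psi> \<alpha> \<beta> i A < 1"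
    and G1: "\<And>k. Hrank M act rec \<psi> (caprob act rec \<psi> \<alpha> \<beta>) i0 (x k) = CARD('f) - 1"
    and G2: "rank (Xmat x) = CARD('d option)"
  shows "\<alpha> = \<alpha>' \<and> \<beta> = \<beta>'"
proof -
  \<comment> \<open>The ratios r_i(A) are well defined by i0_ref alone.\<close>
  have affine_eq: "\<alpha> f + \<beta> f \<bullet> x k = \<alpha>' f + \<beta>' f \<bullet> x k" for f k
  proof -
    let ?S = "hrows M act rec \<psi> (caprob act rec \<psi> \<alpha> \<beta>) i0 (x k)"
    let ?w = "\<chi> f. exp (\<alpha> f + \<beta> f \<bullet> x k)" and ?w' = "\<chi> f. exp (\<alpha>' f + \<beta>' f \<bullet> x k)"
    have "dim ?S = DIM(real^'f) - 1" using G1 by (simp add: Hrank_eq_dim_hrows)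
    moreover have "?w \<noteq> 0" by (simp add: vec_eq_iff)
    moreover have "h \<bullet> ?w = 0" "h \<bullet> ?w' = 0" if "h \<in> ?S" for h
      using hrows_orthogonal_weights[OF i0_ref _ that] same by auto
    ultimately obtain c where c: "?w' = c *\<^sub>R ?w"
      using orthogonal_hyperplane_collinear by blast
    from arg_cong[OF c, of "\<lambda>v. v $ f0"] have "c = 1" using norm norm' by simp
    with c show ?thesis by (simp add: vec_eq_iff)
  qed
  have "\<alpha> f = \<alpha>' f \<and> \<beta> f = \<beta>' f" for f
    using affine_eq_if_Xmat_full_rank[OF G2 affine_eq] .
  then show ?thesis by auto
qed

end
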